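(* Let $f$, $g$, $\xi$, $F$ satisfy the standing assumptions below, and let $x$ be the unique continuous solution of $x'(t)=-f(x(t))+g(t)$, $t>0$, $x(0)=\xi$. Suppose that \[ \lim_{t\to\infty}\frac{g(t)}{f(F^{-1}(t))}=+\infty, \] that $f\in\mathrm{RV}_0(\beta)$ for some $\beta>1$, that $g\in\mathrm{RV}_\infty(-\theta)$ for some $\theta\ge0$, and that $x(t)\to0$ as $t\to\infty$. (i) If $\theta>0$, then $\lim_{t\to\infty}f(x(t))/g(t)=1$. (ii) If $\theta=0$ and there is a decreasing function $\gamma_1$ with $\lim_{t\to\infty}g(t)/\gamma_1(t)=1$, then $\lim_{t\to\infty}f(x(t))/g(t)=1$.
   Context: Standing assumptions: $f\in C(\mathbb{R};\mathbb{R})$ is locally Lipschitz continuous on $\mathbb{R}$, $f(0)=0$ and $xf(x)>0$ for $x\neq0$; $g\in C([0,\infty);\mathbb{R})$ with $g(t)>0$ for $t>0$; $\xi>0$. $F(x)=\int_x^1 \frac{du}{f(u)}$ for $x>0$, with $\lim_{x\to0^+}F(x)=+\infty$; $F^{-1}$ is the inverse of the strictly decreasing function $F$. $\mathrm{RV}_0(\beta)$: measurable positive $\varphi$ on $(0,\infty)$ with $\varphi(\lambda x)/\varphi(x)\to\lambda^\beta$ as $x\to0^+$ for every $\lambda>0$. $\mathrm{RV}_\infty(\alpha)$: measurable positive $h$ with $h(\lambda t)/h(t)\to\lambda^\alpha$ as $t\to\infty$ for every $\lambda>0$. *)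

theory Defs
  imports "HOL-Analysis.Analysis"
begin

definition loc_lipschitz :: "(real \<Rightarrow> real) \<Rightarrow> bool" where
  "loc_lipschitz f \<longleftrightarrow> (\<forall>a b. \<exists>L. L-lipschitz_on {a..b} f)"

definition Fint :: "(real \<Rightarrow> real) \<Rightarrow> real \<Rightarrow> real" where
  "Fint f x = (if x \<le> 1 then integral {x..1} (\<lambda>u. 1 / f u)
               else - integral {1..x} (\<lambda>u. 1 / f u))"

definition Finv :: "(real \<Rightarrow> real) \<Rightarrow> real \<Rightarrow> real" where
  "Finv f t = (THE y. y > 0 \<and> Fint f y = t)"

definition RV0 :: "(real \<Rightarrow> real) \<Rightarrow> real \<Rightarrow> bool" where
  "RV0 \<phi> \<beta> \<longleftrightarrow> (\<forall>x>0. \<phi> x > 0) \<and> set_borel_measurable borel {0<..} \<phi> \<and>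
     (\<forall>l>0. ((\<lambda>x. \<phi> (l * x) / \<phi> x) \<longlongrightarrow> l powr \<beta>) (at_right 0))"

definition RVinf :: "(real \<Rightarrow> real) \<Rightarrow> real \<Rightarrow> bool" where
  "RVinf h \<alpha> \<longleftrightarrow> (\<forall>t>0. h t > 0) \<and> set_borel_measurable borel {0<..} h \<and>
     (\<forall>l>0. ((\<lambda>t. h (l * t) / h t) \<longlongrightarrow> l powr \<alpha>) at_top)"

end

theory Submission
  imports Defs
begin

text \<open>
  Write \<open>r = f (x) / g\<close>, so that \<open>x' = g (1 - r)\<close> and \<open>(F \<circ> x)' = 1 - 1 / r\<close>.
  If \<open>r t > (1 + \<epsilon>)\<^sup>3\<close> at a large time \<open>t\<close>, go back to the last time \<open>S\<close> with
  \<open>r S \<le> 1 + \<epsilon>\<close>. On \<open>[S, t]\<close> the function \<open>F \<circ> x\<close> grows at rate \<open>\<ge> \<epsilon> / (1 + \<epsilon>)\<close>,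
  whereas \<open>F (x t) = o(t)\<close>: since \<open>g \<gg> f \<circ> F\<^sup>-\<^sup>1\<close>, \<open>f (x t)\<close> dominates \<open>f (F\<^sup>-\<^sup>1 t)\<close>, and for
  \<open>f \<in> RV\<^sub>0(\<beta>)\<close>, \<open>\<beta> > 1\<close>, the function \<open>F\<close> is comparable with \<open>w / f w\<close>, which is then small.
  Hence \<open>S \<ge> (1 - \<delta>) t\<close>, so \<open>g S \<le> (1 + \<epsilon>) g t\<close>; as \<open>x\<close> decreases on \<open>[S, t]\<close> and \<open>f\<close> is
  almost increasing near \<open>0\<close>, \<open>f (x t) \<le> (1 + \<epsilon>) f (x S) \<le> (1 + \<epsilon>)\<^sup>3 g t\<close>, a contradiction.
  The lower bound is symmetric: after the last time with \<open>r \<ge> 1 / (1 + \<epsilon>)\<close> the solution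
  increases, and one needs \<open>g\<close> to be almost decreasing, which follows from the uniform
  convergence theorem when \<open>\<theta> > 0\<close> and from the decreasing \<open>\<gamma>\<^sub>1\<close> when \<open>\<theta> = 0\<close>.
\<close>

section \<open>Uniform convergence for regularly varying functions\<close>

lemma additive_uniform_window:
  fixes k :: "real \<Rightarrow> real"
  assumes cont: "continuous_on UNIV k"
    and lim: "\<And>s. ((\<lambda>v. k (v + s) - k v) \<longlongrightarrow> 0) at_top"
    and eta: "\<eta> > 0"
  obtains w\<^sub>0 \<rho> where "\<rho> > 0" "\<And>w d. w \<ge> w\<^sub>0 \<Longrightarrow> \<bar>d\<bar> \<le> \<rho> \<Longrightarrow> \<bar>k (w + d) - k w\<bar> \<le> 2 * \<eta>"
proof -
  define E where "E n = {s. \<forall>v\<ge>real n. \<bar>k (v + s) - k v\<bar> \<le> \<eta>}" for n :: nat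
  have closed_E: "closed (E n)" for n
  proof -
    have "closed {s. \<bar>k (v + s) - k v\<bar> \<le> \<eta>}" for v
      by (intro closed_Collect_le continuous_intros continuous_on_compose2[OF cont]) auto
    moreover have "E n = (\<Inter>v\<in>{real n..}. {s. \<bar>k (v + s) - k v\<bar> \<le> \<eta>})"
      by (auto simp: E_def)
    ultimately show ?thesis by auto
  qed
  have cover: "\<Union>(range E) = UNIV"
  proof safe
    fix s
    have "eventually (\<lambda>v. \<bar>k (v + s) - k v\<bar> < \<eta>) at_top"
      using lim[of s] eta by (auto simp: tendsto_iff dist_real_def)
    then obtain N where N: "\<And>v. v \<ge> N \<Longrightarrow> \<bar>k (v + s) - k v\<bar> < \<eta>"
      by (auto simp: eventually_at_top_linorder)
    have "s \<in> E (nat \<lceil>N\<rceil>)"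
      using N unfolding E_def by (smt (verit) mem_Collect_eq real_nat_ceiling_ge)
    then show "s \<in> \<Union>(range E)" by auto
  qed auto
  have "\<exists>n. interior (E n) \<noteq> {}"
  proof (rule ccontr)
    assume "\<nexists>n. interior (E n) \<noteq> {}"
    then have "euclideanreal interior_of \<Union>(range E) = {}"
      by (intro Baire_category_alt)
        (auto simp: completely_metrizable_space_euclidean closed_E euclidean_interior_of)
    then show False using cover by simp
  qed
  then obtain n p \<rho>\<^sub>0 where "\<rho>\<^sub>0 > 0" "ball p \<rho>\<^sub>0 \<subseteq> E n"
    by (auto simp: mem_interior)
  then have near_p: "p + d \<in> E n" if "\<bar>d\<bar> \<le> \<rho>\<^sub>0 / 2" for d
    using that \<open>ball p \<rho>\<^sub>0 \<subseteq> E n\<close> by (auto simp: dist_real_def subset_iff)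
  show ?thesis
  proof
    show "\<rho>\<^sub>0 / 2 > 0" using \<open>\<rho>\<^sub>0 > 0\<close> by simp
    fix w d assume w: "w \<ge> real n + p" and d: "\<bar>d\<bar> \<le> \<rho>\<^sub>0 / 2"
    \<comment> \<open>compare \<open>k (w + d)\<close> and \<open>k w\<close> with \<open>k (w - p)\<close>, using \<open>p + d, p \<in> E n\<close>\<close>
    have "w - p \<ge> real n" using w by simp
    then have "\<bar>k (w - p + (p + d)) - k (w - p)\<bar> \<le> \<eta>" "\<bar>k (w - p + (p + 0)) - k (w - p)\<bar> \<le> \<eta>"
      using near_p[OF d] near_p[of 0] \<open>\<rho>\<^sub>0 > 0\<close> unfolding E_def by (blast, force)
    then show "\<bar>k (w + d) - k w\<bar> \<le> 2 * \<eta>" by simp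
  qed
qed

lemma additive_uniform_convergence:
  fixes k :: "real \<Rightarrow> real"
  assumes cont: "continuous_on UNIV k"
    and lim: "\<And>s. ((\<lambda>v. k (v + s) - k v) \<longlongrightarrow> 0) at_top"
    and eps: "\<epsilon> > 0"
  shows "eventually (\<lambda>v. \<forall>s\<in>{0..1}. \<bar>k (v + s) - k v\<bar> \<le> \<epsilon>) at_top"
proof -
  define \<eta> where "\<eta> = \<epsilon> / 3"
  have eta: "\<eta> > 0" using eps by (simp add: \<eta>_def)
  obtain w\<^sub>0 \<rho> where rho: "\<rho> > 0"
    and window: "\<And>w d. w \<ge> w\<^sub>0 \<Longrightarrow> \<bar>d\<bar> \<le> \<rho> \<Longrightarrow> \<bar>k (w + d) - k w\<bar> \<le> 2 * \<eta>"
    using additive_uniform_window[OF cont lim eta] by metis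
  define m where "m = nat \<lceil>1 / \<rho>\<rceil>"
  \<comment> \<open>pointwise convergence on the finite grid \<open>j * \<rho>\<close>, \<open>j \<le> m\<close>, then the window fills the gaps\<close>
  have grid: "eventually (\<lambda>v. \<forall>j\<in>{0..m}. \<bar>k (v + real j * \<rho>) - k v\<bar> \<le> \<eta>) at_top"
  proof (rule eventually_ball_finite)
    show "\<forall>j\<in>{0..m}. eventually (\<lambda>v. \<bar>k (v + real j * \<rho>) - k v\<bar> \<le> \<eta>) at_top"
    proof
      fix j
      show "eventually (\<lambda>v. \<bar>k (v + real j * \<rho>) - k v\<bar> \<le> \<eta>) at_top"
        using tendstoD[OF lim[of "real j * \<rho>"] eta] by (auto simp: dist_real_def elim: eventually_mono)
    qed
  qed simp
  show ?thesis
    using grid eventually_ge_at_top[of w\<^sub>0]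
  proof eventually_elim
    case (elim v)
    show ?case
    proof
      fix s :: real assume s: "s \<in> {0..1}"
      define j where "j = nat \<lfloor>s / \<rho>\<rfloor>"
      have "real j \<le> s / \<rho>" "s / \<rho> < real j + 1"
        using s rho by (auto simp: j_def)
      then have j: "real j * \<rho> \<le> s" "s < real j * \<rho> + \<rho>"
        using rho by (simp_all add: field_simps)
      have "real j \<le> 1 / \<rho>"
        using \<open>real j \<le> s / \<rho>\<close> s rho by (smt (verit) divide_right_mono atLeastAtMost_iff)
      then have "j \<in> {0..m}" by (simp add: m_def) linarith
      then have "\<bar>k (v + real j * \<rho>) - k v\<bar> \<le> \<eta>" using elim(1) by blast
      moreover have "\<bar>k (v + s) - k (v + real j * \<rho>)\<bar> \<le> 2 * \<eta>"
        using window[of "v + real j * \<rho>" "s - real j * \<rho>"] j rho elim(2) by (simp add: add_increasing2)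
      ultimately show "\<bar>k (v + s) - k v\<bar> \<le> \<epsilon>" unfolding \<eta>_def by linarith
    qed
  qed
qed

lemma regular_variation_uniform:
  fixes h :: "real \<Rightarrow> real"
  assumes cont: "continuous_on {0<..} h" and pos: "\<And>t. t > 0 \<Longrightarrow> h t > 0"
    and lim: "\<And>l. l > 0 \<Longrightarrow> ((\<lambda>t. h (l * t) / h t) \<longlongrightarrow> l powr \<alpha>) at_top"
    and eta: "\<eta> > 0"
  shows "eventually (\<lambda>t. \<forall>s\<in>{0..1}. \<bar>ln (h (exp s * t)) - ln (h t) - \<alpha> * s\<bar> \<le> \<eta>) at_top"
proof -
  define k where "k v = ln (h (exp (max v 0))) - \<alpha> * max v 0" for v
  have "continuous_on UNIV k"
    unfolding k_def using pos
    by (intro continuous_intros continuous_on_compose2[OF cont]) (auto simp: less_imp_neq[symmetric])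
  moreover have "((\<lambda>v. k (v + s) - k v) \<longlongrightarrow> 0) at_top" for s
  proof -
    have "((\<lambda>v. h (exp s * exp v) / h (exp v)) \<longlongrightarrow> exp s powr \<alpha>) at_top"
      by (rule filterlim_compose[OF lim exp_at_top]) simp
    then have "((\<lambda>v. ln (h (exp s * exp v) / h (exp v)) - \<alpha> * s) \<longlongrightarrow> ln (exp s powr \<alpha>) - \<alpha> * s) at_top"
      by (intro tendsto_intros) auto
    moreover have "eventually (\<lambda>v. ln (h (exp s * exp v) / h (exp v)) - \<alpha> * s = k (v + s) - k v) at_top"
      using eventually_ge_at_top[of "\<bar>s\<bar>"]
    proof eventually_elim
      case (elim v)
      then have "max v 0 = v" "max (v + s) 0 = v + s" by auto
      moreover have "exp s * exp v = exp (v + s)" by (simp add: exp_add[symmetric] add.commute)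
      moreover have "h (exp (v + s)) > 0" "h (exp v) > 0" using pos by auto
      ultimately show ?case by (simp add: k_def ln_div algebra_simps)
    qed
    ultimately show ?thesis by (simp add: tendsto_cong ln_powr)
  qed
  ultimately have "eventually (\<lambda>v. \<forall>s\<in>{0..1}. \<bar>k (v + s) - k v\<bar> \<le> \<eta>) at_top"
    using eta by (rule additive_uniform_convergence)
  then obtain N where N: "\<And>v s. v \<ge> N \<Longrightarrow> s \<in> {0..1} \<Longrightarrow> \<bar>k (v + s) - k v\<bar> \<le> \<eta>"
    unfolding eventually_at_top_linorder by blast
  show ?thesis
    using eventually_ge_at_top[of "exp (max N 0)"]
  proof eventually_elim
    case (elim t)
    then have t: "t > 0" "ln t \<ge> max N 0"
      using exp_gt_zero[of "max N 0"] by (linarith, metis ln_exp ln_le_cancel_iff exp_gt_zero less_le_trans)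
    show ?case
    proof
      fix s :: real assume s: "s \<in> {0..1}"
      have "exp (ln t + s) = exp s * t" using t by (simp add: exp_add)
      then show "\<bar>ln (h (exp s * t)) - ln (h t) - \<alpha> * s\<bar> \<le> \<eta>"
        using N[of "ln t" s] t s by (simp add: k_def algebra_simps)
    qed
  qed
qed

section \<open>Regular variation at zero\<close>

lemma RV0_pos: "RV0 f \<beta> \<Longrightarrow> x > 0 \<Longrightarrow> f x > 0"
  by (auto simp: RV0_def)

lemma RV0_ratio_bound:
  assumes rv: "RV0 f \<beta>" and l: "l > 0" and c: "l powr \<beta> < c"
  obtains \<delta> where "\<delta> > 0" "\<And>w. 0 < w \<Longrightarrow> w \<le> \<delta> \<Longrightarrow> f (l * w) \<le> c * f w"
proof -
  have "((\<lambda>x. f (l * x) / f x) \<longlongrightarrow> l powr \<beta>) (at_right 0)"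
    using rv l by (auto simp: RV0_def)
  then have "eventually (\<lambda>x. f (l * x) / f x < c) (at_right 0)"
    using c by (rule order_tendstoD)
  then obtain b where b: "b > 0" "\<And>y. 0 < y \<Longrightarrow> y < b \<Longrightarrow> f (l * y) / f y < c"
    by (auto simp: eventually_at_right_field)
  show ?thesis
  proof
    show "b / 2 > 0" using b by simp
    fix w assume "0 < w" "w \<le> b / 2"
    then show "f (l * w) \<le> c * f w"
      using b(2)[of w] RV0_pos[OF rv, of w] by (simp add: divide_simps)
  qed
qed

lemma RV0_halving:
  assumes rv: "RV0 f \<beta>" and beta: "\<beta> > 1"
  obtains q \<delta> where "0 < q" "q < 1/2" "\<delta> > 0" "\<And>w. 0 < w \<Longrightarrow> w \<le> \<delta> \<Longrightarrow> f (w / 2) \<le> q * f w"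
proof -
  define q where "q = ((1/2) powr \<beta> + 1/2) / 2"
  have "(1/2::real) powr \<beta> < (1/2) powr 1"
    using beta by (intro powr_less_mono') auto
  then have q: "0 < q" "q < 1/2" "(1/2) powr \<beta> < q"
    unfolding q_def using powr_gt_zero[of "1/2::real" \<beta>] by (simp_all del: powr_gt_zero)
  obtain \<delta> where "\<delta> > 0" "\<And>w. 0 < w \<Longrightarrow> w \<le> \<delta> \<Longrightarrow> f (1/2 * w) \<le> q * f w"
    using RV0_ratio_bound[OF rv _ q(3)] by auto
  with q show ?thesis using that by auto
qed

lemma RV0_doubling:
  assumes rv: "RV0 f \<beta>"
  obtains K \<delta> where "K > 0" "\<delta> > 0" "\<And>w. 0 < w \<Longrightarrow> w \<le> \<delta> \<Longrightarrow> f (2 * w) \<le> K * f w"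
proof -
  obtain \<delta> where "\<delta> > 0" "\<And>w. 0 < w \<Longrightarrow> w \<le> \<delta> \<Longrightarrow> f (2 * w) \<le> (2 powr \<beta> + 1) * f w"
    using RV0_ratio_bound[OF rv, of 2 "2 powr \<beta> + 1"] by auto
  moreover have "2 powr \<beta> + 1 > (0::real)" by (simp add: add_pos_pos)
  ultimately show ?thesis using that by blast
qed

lemma RV0_reciprocal_RVinf_limit:
  assumes rv: "RV0 f \<beta>" and l: "l > 0"
  shows "((\<lambda>t. f (1 / (l * t)) / f (1 / t)) \<longlongrightarrow> l powr (- \<beta>)) at_top"
proof -
  have "((\<lambda>x. f (inverse l * x) / f x) \<longlongrightarrow> inverse l powr \<beta>) (at_right 0)"
    using rv l by (auto simp: RV0_def)
  from filterlim_compose[OF this filterlim_inverse_at_right_top]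
  show ?thesis using l by (simp add: powr_minus_divide powr_divide field_simps)
qed

lemma RV0_uniform_ratio:
  assumes rv: "RV0 f \<beta>" and cont: "continuous_on {0<..} f" and beta: "\<beta> \<ge> 0" and eps: "\<epsilon> > 0"
  obtains \<delta> where "\<delta> > 0"
    "\<And>u \<mu>. 0 < u \<Longrightarrow> u \<le> \<delta> \<Longrightarrow> 1/2 \<le> \<mu> \<Longrightarrow> \<mu> \<le> 1 \<Longrightarrow> f (\<mu> * u) \<le> (1 + \<epsilon>) * f u"
proof -
  define h where "h t = f (1 / t)" for t
  have "continuous_on {0<..} h"
    unfolding h_def by (intro continuous_on_compose2[OF cont] continuous_intros) auto
  moreover have "\<And>t. t > 0 \<Longrightarrow> h t > 0" by (simp add: h_def RV0_pos[OF rv])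
  moreover have "((\<lambda>t. h (l * t) / h t) \<longlongrightarrow> l powr (- \<beta>)) at_top" if "l > 0" for l
    unfolding h_def using RV0_reciprocal_RVinf_limit[OF rv that] .
  ultimately have "eventually (\<lambda>t. \<forall>s\<in>{0..1}. \<bar>ln (h (exp s * t)) - ln (h t) - (- \<beta>) * s\<bar> \<le> ln (1 + \<epsilon>)) at_top"
    using eps by (intro regular_variation_uniform) auto
  then obtain T where T: "\<And>t s. t \<ge> T \<Longrightarrow> s \<in> {0..1} \<Longrightarrow> ln (h (exp s * t)) - ln (h t) + \<beta> * s \<le> ln (1 + \<epsilon>)"
    unfolding eventually_at_top_linorder by fastforce
  show ?thesis
  proof
    show "1 / max T 1 > 0" by simp
    fix u \<mu> :: real
    assume u: "0 < u" "u \<le> 1 / max T 1" and \<mu>: "1/2 \<le> \<mu>" "\<mu> \<le> 1"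
    have "1 / u \<ge> max T 1"
      using u by (simp add: le_divide_eq mult.commute del: max.bounded_iff)
    moreover have "- ln \<mu> \<in> {0..1}"
      using \<mu> ln_2_less_1 ln_le_cancel_iff[of "1/2" \<mu>] by (auto simp: ln_div)
    moreover have "h (exp (- ln \<mu>) * (1 / u)) = f (\<mu> * u)" "h (1 / u) = f u"
      using \<mu> by (simp_all add: h_def exp_minus field_simps)
    ultimately have "ln (f (\<mu> * u)) - ln (f u) - \<beta> * ln \<mu> \<le> ln (1 + \<epsilon>)"
      using T[of "1 / u" "- ln \<mu>"] by simp
    moreover have "\<beta> * ln \<mu> \<le> 0" using beta \<mu> by (simp add: mult_nonneg_nonpos)
    ultimately have "ln (f (\<mu> * u)) \<le> ln ((1 + \<epsilon>) * f u)"
      using eps RV0_pos[OF rv u(1)] by (simp add: ln_mult)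
    then show "f (\<mu> * u) \<le> (1 + \<epsilon>) * f u"
      using RV0_pos[OF rv, of "\<mu> * u"] RV0_pos[OF rv u(1)] u \<mu> eps by simp
  qed
qed

lemma dyadic_bracket:
  fixes z u :: real
  assumes "0 < z" "z \<le> u"
  obtains n where "u / 2 ^ Suc n < z" "z \<le> u / 2 ^ n"
proof -
  obtain N where "u / z < 2 ^ N" using real_arch_pow[of 2 "u / z"] by auto
  define P where "P m \<longleftrightarrow> u / z < (2::real) ^ m" for m
  obtain m where m: "P m" "\<And>k. P k \<Longrightarrow> m \<le> k"
    using \<open>u / z < 2 ^ N\<close> by (metis P_def exists_least_iff not_le)
  have "m \<noteq> 0"
  proof
    assume "m = 0"
    then have "u / z < 1" using m(1) by (simp add: P_def)
    then show False using assms by (simp add: divide_less_eq)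
  qed
  then obtain n where n: "m = Suc n" by (cases m) auto
  have "\<not> P n" using m(2)[of n] n by auto
  show ?thesis
  proof
    show "u / 2 ^ Suc n < z" using m(1) n assms by (simp add: P_def field_simps del: power_Suc)
    show "z \<le> u / 2 ^ n" using \<open>\<not> P n\<close> assms by (simp add: P_def field_simps)
  qed
qed

lemma doubling_induct:
  fixes P :: "real \<Rightarrow> bool"
  assumes "0 < w" "w \<le> \<delta>"
    and base: "\<And>w. \<delta> / 2 \<le> w \<Longrightarrow> w \<le> \<delta> \<Longrightarrow> P w"
    and step: "\<And>w. 0 < w \<Longrightarrow> 2 * w \<le> \<delta> \<Longrightarrow> P (2 * w) \<Longrightarrow> P w"
  shows "P w"
proof -
  have "\<delta> > 0" using assms(1,2) by linarith
  have "P w" if "\<delta> / 2 ^ Suc n \<le> w" "w \<le> \<delta>" for n w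
    using that
  proof (induction n arbitrary: w)
    case 0
    then show ?case by (intro base) auto
  next
    case (Suc n)
    show ?case
    proof (cases "\<delta> / 2 ^ Suc n \<le> w")
      case True
      then show ?thesis using Suc by blast
    next
      case False
      have "0 < \<delta> / 2 ^ Suc (Suc n)" "\<delta> / 2 ^ Suc n \<le> \<delta> / 2"
        "\<delta> / 2 ^ Suc (Suc n) = (\<delta> / 2 ^ Suc n) / 2"
        using \<open>\<delta> > 0\<close> by (simp_all add: field_simps)
      then have "0 < w" "2 * w \<le> \<delta>" "\<delta> / 2 ^ Suc n \<le> 2 * w"
        using Suc.prems(1) False by (linarith, linarith, simp add: field_simps)
      then show ?thesis by (intro step[OF _ _ Suc.IH]) auto
    qed
  qed
  moreover obtain n where "\<delta> / 2 ^ Suc n < w" using dyadic_bracket[OF assms(1,2)] by blast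
  ultimately show ?thesis using assms(2) less_imp_le by blast
qed

lemma iterate_halving_bound:
  fixes f :: "real \<Rightarrow> real"
  assumes half: "\<And>w. 0 < w \<Longrightarrow> w \<le> \<delta> \<Longrightarrow> f (w / 2) \<le> q * f w" and q: "q \<ge> 0"
    and u: "0 < u" "u \<le> \<delta>"
  shows "f (u / 2 ^ n) \<le> q ^ n * f u"
proof (induction n)
  case (Suc n)
  have "u / 2 ^ n \<le> u" using u by (simp add: divide_le_eq one_le_power)
  then have "f ((u / 2 ^ n) / 2) \<le> q * f (u / 2 ^ n)" using u by (intro half) auto
  also have "\<dots> \<le> q * (q ^ n * f u)" using Suc q by (intro mult_left_mono)
  finally show ?case by (simp add: field_simps)
qed simp

lemma RV0_potter:
  assumes rv: "RV0 f \<beta>" and cont: "continuous_on {0<..} f" and beta: "\<beta> > 1" and eps: "\<epsilon> > 0"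
  obtains q \<delta> where "0 < q" "q < 1/2" "\<delta> > 0"
    "\<And>z u n. 0 < z \<Longrightarrow> u \<le> \<delta> \<Longrightarrow> u / 2 ^ Suc n < z \<Longrightarrow> z \<le> u / 2 ^ n \<Longrightarrow> f z \<le> (1 + \<epsilon>) * q ^ n * f u"
proof -
  obtain q \<delta>\<^sub>1 where q: "0 < q" "q < 1/2" "\<delta>\<^sub>1 > 0"
    and half: "\<And>w. 0 < w \<Longrightarrow> w \<le> \<delta>\<^sub>1 \<Longrightarrow> f (w / 2) \<le> q * f w"
    using RV0_halving[OF rv beta] by metis
  obtain \<delta>\<^sub>2 where "\<delta>\<^sub>2 > 0"
    and ratio: "\<And>u \<mu>. 0 < u \<Longrightarrow> u \<le> \<delta>\<^sub>2 \<Longrightarrow> 1/2 \<le> \<mu> \<Longrightarrow> \<mu> \<le> 1 \<Longrightarrow> f (\<mu> * u) \<le> (1 + \<epsilon>) * f u"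
    using RV0_uniform_ratio[OF rv cont _ eps] beta by auto
  show ?thesis
  proof (rule that[of q "min \<delta>\<^sub>1 \<delta>\<^sub>2"])
    show "min \<delta>\<^sub>1 \<delta>\<^sub>2 > 0" using q \<open>\<delta>\<^sub>2 > 0\<close> by simp
    fix z u :: real and n :: nat
    assume z: "0 < z" "u \<le> min \<delta>\<^sub>1 \<delta>\<^sub>2" "u / 2 ^ Suc n < z" "z \<le> u / 2 ^ n"
    define w where "w = u / 2 ^ n"
    have "u > 0" using z(1,4) by (smt (verit) divide_nonpos_pos zero_less_power)
    then have w: "w > 0" "w \<le> u" using z by (auto simp: w_def divide_le_eq one_le_power)
    have fw: "f w \<le> q ^ n * f u"
      unfolding w_def using z w q by (intro iterate_halving_bound[where f = f, OF half]) auto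
    have "f z = f ((z / w) * w)" using w by simp
    also have "\<dots> \<le> (1 + \<epsilon>) * f w"
    proof (rule ratio)
      show "w \<le> \<delta>\<^sub>2" using w z by simp
      show "1/2 \<le> z / w" "z / w \<le> 1" using z w by (auto simp: w_def field_simps)
    qed (use w in simp)
    also have "\<dots> \<le> (1 + \<epsilon>) * (q ^ n * f u)" using fw eps by (intro mult_left_mono) auto
    finally show "f z \<le> (1 + \<epsilon>) * q ^ n * f u" by (simp add: mult.assoc)
  qed (use q in auto)
qed

lemma RV0_almost_increasing:
  assumes rv: "RV0 f \<beta>" and cont: "continuous_on {0<..} f" and beta: "\<beta> > 1" and eps: "\<epsilon> > 0"
  obtains \<delta> where "\<delta> > 0" "\<And>z u. 0 < z \<Longrightarrow> z \<le> u \<Longrightarrow> u \<le> \<delta> \<Longrightarrow> f z \<le> (1 + \<epsilon>) * f u"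
proof -
  obtain q \<delta> where q: "0 < q" "q < 1/2" "\<delta> > 0"
    and potter: "\<And>z u n. 0 < z \<Longrightarrow> u \<le> \<delta> \<Longrightarrow> u / 2 ^ Suc n < z \<Longrightarrow> z \<le> u / 2 ^ n \<Longrightarrow> f z \<le> (1 + \<epsilon>) * q ^ n * f u"
    using RV0_potter[OF rv cont beta eps] by metis
  show ?thesis
  proof
    fix z u :: real assume z: "0 < z" "z \<le> u" "u \<le> \<delta>"
    obtain n where n: "u / 2 ^ Suc n < z" "z \<le> u / 2 ^ n" using dyadic_bracket[OF z(1,2)] .
    have "f z \<le> (1 + \<epsilon>) * q ^ n * f u" using potter[OF z(1,3) n] .
    also have "\<dots> \<le> (1 + \<epsilon>) * 1 * f u"
      using q eps RV0_pos[OF rv, of u] z by (intro mult_right_mono mult_left_mono power_le_one) auto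
    finally show "f z \<le> (1 + \<epsilon>) * f u" by simp
  qed (use q in auto)
qed

text \<open>If \<open>f u\<close> dominates \<open>f z\<close> by a large factor, then \<open>u / f u\<close> is small compared with
  \<open>z / f z\<close>: either \<open>u\<close> is many dyadic shells above \<open>z\<close>, where the Potter bound wins, or it is
  within a few shells, where the factor \<open>M\<close> wins.\<close>
lemma RV0_dominated_ratio:
  assumes rv: "RV0 f \<beta>" and cont: "continuous_on {0<..} f" and beta: "\<beta> > 1" and eta: "\<eta> > 0"
  obtains M \<delta> where "M > 0" "\<delta> > 0"
    "\<And>z u. 0 < z \<Longrightarrow> z \<le> \<delta> \<Longrightarrow> 0 < u \<Longrightarrow> u \<le> \<delta> \<Longrightarrow> M * f z \<le> f u \<Longrightarrow> u * f z \<le> \<eta> * (z * f u)"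
proof -
  obtain \<delta>\<^sub>1 where "\<delta>\<^sub>1 > 0"
    and almost_inc: "\<And>z u. 0 < z \<Longrightarrow> z \<le> u \<Longrightarrow> u \<le> \<delta>\<^sub>1 \<Longrightarrow> f z \<le> (1 + 1) * f u"
    using RV0_almost_increasing[OF rv cont beta zero_less_one] by metis
  obtain q \<delta>\<^sub>2 where q: "0 < q" "q < 1/2" "\<delta>\<^sub>2 > 0"
    and potter: "\<And>z u n. 0 < z \<Longrightarrow> u \<le> \<delta>\<^sub>2 \<Longrightarrow> u / 2 ^ Suc n < z \<Longrightarrow> z \<le> u / 2 ^ n \<Longrightarrow> f z \<le> (1 + 1) * q ^ n * f u"
    using RV0_potter[OF rv cont beta zero_less_one] by metis
  obtain n\<^sub>0 where n\<^sub>0: "(2 * q) ^ n\<^sub>0 < \<eta> / 4"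
    using real_arch_pow_inv[of "\<eta> / 4" "2 * q"] eta q by auto
  define M where "M = max 3 (2 ^ n\<^sub>0 / \<eta>)"
  have M: "M \<ge> 3" "M \<ge> 2 ^ n\<^sub>0 / \<eta>" by (auto simp: M_def)
  show ?thesis
  proof (rule that[of M "min \<delta>\<^sub>1 \<delta>\<^sub>2"])
    fix z u assume z: "0 < z" "z \<le> min \<delta>\<^sub>1 \<delta>\<^sub>2"
      and u: "0 < u" "u \<le> min \<delta>\<^sub>1 \<delta>\<^sub>2" and dom: "M * f z \<le> f u"
    have fz: "f z > 0" and fu: "f u > 0" using RV0_pos[OF rv] z u by auto
    have "z \<le> u"
    proof (rule ccontr)
      assume "\<not> z \<le> u"
      then have "f u \<le> 2 * f z" using almost_inc[of u z] u z by auto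
      moreover have "3 * f z \<le> M * f z" using M fz by (intro mult_right_mono) auto
      ultimately show False using dom fz by linarith
    qed
    then obtain n where n: "u / 2 ^ Suc n < z" "z \<le> u / 2 ^ n" using dyadic_bracket[OF z(1)] by blast
    have uz: "u / z < 2 ^ Suc n" using n(1) z by (simp add: field_simps del: power_Suc)
    have "(u / z) * (f z / f u) \<le> \<eta>"
    proof (cases "n\<^sub>0 \<le> n")
      case True
      have "f z / f u \<le> 2 * q ^ n" using potter[OF z(1) _ n] u fu by (simp add: field_simps)
      then have "(u / z) * (f z / f u) \<le> 2 ^ Suc n * (2 * q ^ n)"
        using uz fz fu z u by (intro mult_mono) auto
      also have "\<dots> = 4 * (2 * q) ^ n" by (simp add: power_mult_distrib)
      also have "\<dots> \<le> 4 * (2 * q) ^ n\<^sub>0"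
        using True q by (intro mult_left_mono power_decreasing) auto
      finally show ?thesis using n\<^sub>0 by linarith
    next
      case False
      have "f z / f u \<le> 1 / M" using dom fz fu M by (simp add: field_simps)
      then have "(u / z) * (f z / f u) \<le> 2 ^ Suc n * (1 / M)"
        using uz fz fu z u M by (intro mult_mono) auto
      also have "\<dots> \<le> 2 ^ n\<^sub>0 * (1 / M)"
        using False M by (intro mult_right_mono power_increasing) auto
      also have "\<dots> \<le> \<eta>" using M eta by (simp add: field_simps)
      finally show ?thesis .
    qed
    then show "u * f z \<le> \<eta> * (z * f u)" using z fu by (simp add: field_simps)
  qed (use M q \<open>\<delta>\<^sub>1 > 0\<close> in auto)
qed

section \<open>The function \<open>F\<close>\<close>

locale rate_function =
  fixes f :: "real \<Rightarrow> real"
  assumes cont: "continuous_on {0<..} f"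
    and pos: "\<And>w. w > 0 \<Longrightarrow> f w > 0"
begin

lemma continuous_on_reciprocal: "0 < a \<Longrightarrow> continuous_on {a..b} (\<lambda>u. 1 / f u)"
  by (intro continuous_intros continuous_on_subset[OF cont]) (auto, smt (verit) pos)

lemma integrable_reciprocal: "0 < a \<Longrightarrow> (\<lambda>u. 1 / f u) integrable_on {a..b}"
  by (rule integrable_continuous_interval[OF continuous_on_reciprocal])

lemma Fint_le_1: "x \<le> 1 \<Longrightarrow> Fint f x = integral {x..1} (\<lambda>u. 1 / f u)"
  by (simp add: Fint_def)

lemma Fint_diff: "0 < a \<Longrightarrow> a \<le> b \<Longrightarrow> b \<le> 1 \<Longrightarrow> Fint f a - Fint f b = integral {a..b} (\<lambda>u. 1 / f u)"
  using Henstock_Kurzweil_Integration.integral_combine[of a b 1 "\<lambda>u. 1 / f u", OF _ _ integrable_reciprocal]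
  by (simp add: Fint_le_1)

lemma Fint_diff_le:
  assumes "0 < a" "a \<le> b" "b \<le> 1" "\<And>u. a \<le> u \<Longrightarrow> u \<le> b \<Longrightarrow> 1 / f u \<le> hi"
  shows "Fint f a - Fint f b \<le> (b - a) * hi"
proof -
  have "integral {a..b} (\<lambda>u. 1 / f u) \<le> integral {a..b} (\<lambda>u. hi)"
    using assms by (intro integral_le integrable_reciprocal) auto
  then show ?thesis using assms by (simp add: Fint_diff)
qed

lemma Fint_diff_ge:
  assumes "0 < a" "a \<le> b" "b \<le> 1" "\<And>u. a \<le> u \<Longrightarrow> u \<le> b \<Longrightarrow> lo \<le> 1 / f u"
  shows "(b - a) * lo \<le> Fint f a - Fint f b"
proof -
  have "integral {a..b} (\<lambda>u. lo) \<le> integral {a..b} (\<lambda>u. 1 / f u)"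
    using assms by (intro integral_le integrable_reciprocal) auto
  then show ?thesis using assms by (simp add: Fint_diff)
qed

lemma Fint_nonneg: "0 < x \<Longrightarrow> x \<le> 1 \<Longrightarrow> Fint f x \<ge> 0"
  unfolding Fint_le_1 by (rule integral_nonneg[OF integrable_reciprocal]) (auto, smt (verit) pos)

lemma Fint_1: "Fint f 1 = 0" by (simp add: Fint_def)

lemma Fint_nonpos: "x > 1 \<Longrightarrow> Fint f x \<le> 0"
proof -
  assume x: "x > 1"
  have "integral {1..x} (\<lambda>u. 1 / f u) \<ge> 0"
    by (rule integral_nonneg[OF integrable_reciprocal]) (auto, smt (verit) pos)
  then show ?thesis using x by (simp add: Fint_def)
qed

lemma continuous_on_Fint: "0 < a \<Longrightarrow> continuous_on {a..1} (Fint f)"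
proof -
  assume a: "0 < a"
  have "continuous_on {a..1} (\<lambda>x. integral {x..1} (\<lambda>u. 1 / f u))"
    by (rule indefinite_integral_continuous_1'[OF integrable_reciprocal[OF a]])
  then show ?thesis by (rule continuous_on_cong[THEN iffD1, rotated 2]) (auto simp: Fint_le_1)
qed

lemma has_real_derivative_Fint: "0 < u \<Longrightarrow> u < 1 \<Longrightarrow> (Fint f has_real_derivative - (1 / f u)) (at u)"
proof -
  assume u: "0 < u" "u < 1"
  have "((\<lambda>x. integral {x..1} (\<lambda>u. 1 / f u)) has_real_derivative - (1 / f u)) (at u within {u/2..1})"
    by (rule integral_has_real_derivative'[OF continuous_on_reciprocal]) (use u in auto)
  moreover have "u \<in> interior {u/2..1}" using u by auto
  ultimately have "((\<lambda>x. integral {x..1} (\<lambda>u. 1 / f u)) has_real_derivative - (1 / f u)) (at u)"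
    by (metis at_within_interior)
  then show ?thesis
  proof (rule has_field_derivative_transform_within_open[where S = "{..<1}"])
    show "open {..<(1::real)}" by simp
    show "u \<in> {..<1}" using u by simp
    fix x :: real assume "x \<in> {..<1}"
    then show "integral {x..1} (\<lambda>u. 1 / f u) = Fint f x" using Fint_le_1[of x] by simp
  qed
qed

lemma Fint_strict_decreasing: "0 < a \<Longrightarrow> a < b \<Longrightarrow> b \<le> 1 \<Longrightarrow> Fint f a > Fint f b"
proof -
  assume ab: "0 < a" "a < b" "b \<le> 1"
  show ?thesis
  proof (rule DERIV_neg_imp_decreasing_open[OF ab(2)])
    fix x assume "a < x" "x < b"
    then show "\<exists>y. (Fint f has_real_derivative y) (at x) \<and> y < 0"
      using has_real_derivative_Fint[of x] pos[of x] ab by auto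
  next
    show "continuous_on {a..b} (Fint f)" by (rule continuous_on_subset[OF continuous_on_Fint[OF ab(1)]]) (use ab in auto)
  qed
qed

lemma Finv_spec:
  assumes Flim: "filterlim (Fint f) at_top (at_right 0)" and t: "t > 0"
  shows "0 < Finv f t \<and> Finv f t \<le> 1 \<and> Fint f (Finv f t) = t"
proof -
  have "eventually (\<lambda>x. t < Fint f x) (at_right 0)"
    using Flim by (simp add: filterlim_at_top_dense)
  then obtain b where b: "b > 0" "\<And>y. 0 < y \<Longrightarrow> y < b \<Longrightarrow> t < Fint f y"
    by (auto simp: eventually_at_right_field)
  define a where "a = min (b/2) (1/2)"
  have a: "0 < a" "a < b" "a \<le> 1" using b by (auto simp: a_def)
  have Fa: "t < Fint f a" using b a by auto
  obtain y where y: "a \<le> y" "y \<le> 1" "Fint f y = t"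
    using IVT2'[of "Fint f" 1 t a, OF _ _ a(3) continuous_on_Fint[OF a(1)]] Fa t Fint_1 by auto
  have ypos: "y > 0" using a y by auto
  have uniq: "y' = y" if y': "y' > 0 \<and> Fint f y' = t" for y'
  proof -
    have "y' \<le> 1" using Fint_nonpos[of y'] y' t by force
    show ?thesis
    proof (rule ccontr)
      assume "y' \<noteq> y"
      then consider "y' < y" | "y < y'" by linarith
      then show False
      proof cases
        case 1 then show False using Fint_strict_decreasing[of y' y] y y' by auto
      next
        case 2 then show False using Fint_strict_decreasing[of y y'] \<open>y' \<le> 1\<close> ypos y y' by auto
      qed
    qed
  qed
  have "Finv f t = y"
    unfolding Finv_def
  proof (rule the_equality)
    show "y > 0 \<and> Fint f y = t" using ypos y by simp
    fix y' assume "y' > 0 \<and> Fint f y' = t" then show "y' = y" by (rule uniq)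
  qed
  then show ?thesis using ypos y by auto
qed

lemma eventually_Finv_le:
  assumes Flim: "filterlim (Fint f) at_top (at_right 0)" and d: "0 < \<delta>" "\<delta> \<le> 1"
  shows "eventually (\<lambda>t. Finv f t \<le> \<delta>) at_top"
  using eventually_gt_at_top[of "max 0 (Fint f \<delta>)"]
proof eventually_elim
  case (elim t)
  then have t: "t > 0" "t > Fint f \<delta>" by auto
  have P: "0 < Finv f t" "Finv f t \<le> 1" "Fint f (Finv f t) = t" using Finv_spec[OF Flim t(1)] by auto
  show ?case
  proof (rule ccontr)
    assume "\<not> Finv f t \<le> \<delta>"
    then have "Fint f (Finv f t) < Fint f \<delta>" using Fint_strict_decreasing[of \<delta> "Finv f t"] d P by auto
    then show False using P t by auto
  qed
qed



lemma Fint_upper_bound: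
  assumes rv: "RV0 f \<beta>" and beta: "\<beta> > 1"
  obtains \<delta> C where "0 < \<delta>" "\<delta> \<le> 1" "C > 0"
    "\<And>w. 0 < w \<Longrightarrow> w \<le> \<delta> \<Longrightarrow> Fint f w \<le> Fint f \<delta> + C * w / f w"
proof -
  obtain \<delta>\<^sub>1 where "\<delta>\<^sub>1 > 0"
    and almost_inc: "\<And>z u. 0 < z \<Longrightarrow> z \<le> u \<Longrightarrow> u \<le> \<delta>\<^sub>1 \<Longrightarrow> f z \<le> (1 + 1) * f u"
    using RV0_almost_increasing[OF rv cont beta zero_less_one] by metis
  obtain q \<delta>\<^sub>2 where q: "0 < q" "q < 1/2" "\<delta>\<^sub>2 > 0"
    and half: "\<And>w. 0 < w \<Longrightarrow> w \<le> \<delta>\<^sub>2 \<Longrightarrow> f (w / 2) \<le> q * f w"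
    using RV0_halving[OF rv beta] by metis
  define \<delta> where "\<delta> = min (min \<delta>\<^sub>1 \<delta>\<^sub>2) 1"
  define C where "C = 2 / (1 - 2 * q)"
  have \<delta>: "0 < \<delta>" "\<delta> \<le> 1" "\<delta> \<le> \<delta>\<^sub>1" "\<delta> \<le> \<delta>\<^sub>2" using \<open>\<delta>\<^sub>1 > 0\<close> q by (auto simp: \<delta>_def)
  have C: "C \<ge> 2" "C * (2 * q) + 2 = C" using q by (auto simp: C_def field_simps)
  have step: "Fint f w - Fint f b \<le> (b - w) * (2 / f w)" if "0 < w" "w \<le> b" "b \<le> \<delta>" for w b
  proof (rule Fint_diff_le)
    fix u assume "w \<le> u" "u \<le> b"
    then have "f w \<le> 2 * f u" using almost_inc[of w u] that \<delta> by auto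
    then show "1 / f u \<le> 2 / f w" using pos[of w] pos[of u] \<open>w \<le> u\<close> that by (simp add: field_simps)
  qed (use that \<delta> in auto)
  \<comment> \<open>the halving bound \<open>q < 1/2\<close> keeps the constant \<open>C\<close> from growing along the induction\<close>
  have "Fint f w \<le> Fint f \<delta> + C * w / f w" if "0 < w" "w \<le> \<delta>" for w
  proof (rule doubling_induct[where P = "\<lambda>w. Fint f w \<le> Fint f \<delta> + C * w / f w", OF that])
    fix w assume w: "\<delta> / 2 \<le> w" "w \<le> \<delta>"
    then have "0 < w" "\<delta> - w \<le> w" using \<delta> by auto
    then have "Fint f w - Fint f \<delta> \<le> w * (2 / f w)"
      using step[of w \<delta>] pos[of w] w by (smt (verit) divide_pos_pos mult_right_mono)
    also have "\<dots> \<le> C * w / f w" using C \<open>0 < w\<close> pos[of w] by (simp add: field_simps)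
    finally show "Fint f w \<le> Fint f \<delta> + C * w / f w" by simp
  next
    fix w assume w: "0 < w" "2 * w \<le> \<delta>" and IH: "Fint f (2 * w) \<le> Fint f \<delta> + C * (2 * w) / f (2 * w)"
    have "Fint f w - Fint f (2 * w) \<le> 2 * w / f w" using step[of w "2 * w"] w by (simp add: mult.commute)
    moreover have "C * (2 * w) / f (2 * w) \<le> C * (2 * q) * w / f w"
    proof -
      have "f w \<le> q * f (2 * w)" using half[of "2 * w"] w \<delta> by simp
      then show ?thesis using C w pos[of w] pos[of "2 * w"] q by (simp add: field_simps)
    qed
    ultimately have "Fint f w \<le> Fint f \<delta> + (C * (2 * q) + 2) * w / f w"
      using IH by (simp add: add_divide_distrib algebra_simps)
    then show "Fint f w \<le> Fint f \<delta> + C * w / f w" using C by simp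
  qed
  moreover have "C > 0" using C by simp
  ultimately show ?thesis using that \<delta>(1,2) by blast
qed

lemma Fint_lower_bound:
  assumes rv: "RV0 f \<beta>" and beta: "\<beta> > 1"
  obtains \<delta> K where "0 < \<delta>" "K > 0" "\<And>z. 0 < z \<Longrightarrow> z \<le> \<delta> \<Longrightarrow> z / (K * f z) \<le> Fint f z"
proof -
  obtain \<delta>\<^sub>1 where "\<delta>\<^sub>1 > 0"
    and almost_inc: "\<And>z u. 0 < z \<Longrightarrow> z \<le> u \<Longrightarrow> u \<le> \<delta>\<^sub>1 \<Longrightarrow> f z \<le> (1 + 1) * f u"
    using RV0_almost_increasing[OF rv cont beta zero_less_one] by metis
  obtain K \<delta>\<^sub>2 where K: "K > 0" "\<delta>\<^sub>2 > 0" and double: "\<And>w. 0 < w \<Longrightarrow> w \<le> \<delta>\<^sub>2 \<Longrightarrow> f (2 * w) \<le> K * f w"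
    using RV0_doubling[OF rv] by metis
  define \<delta> where "\<delta> = min (min \<delta>\<^sub>1 1 / 2) \<delta>\<^sub>2"
  have \<delta>: "0 < \<delta>" "2 * \<delta> \<le> \<delta>\<^sub>1" "2 * \<delta> \<le> 1" "\<delta> \<le> \<delta>\<^sub>2" using \<open>\<delta>\<^sub>1 > 0\<close> K by (auto simp: \<delta>_def)
  show ?thesis
  proof (rule that[of \<delta> "2 * K"])
    fix z assume z: "0 < z" "z \<le> \<delta>"
    have "(2 * z - z) * (1 / (2 * f (2 * z))) \<le> Fint f z - Fint f (2 * z)"
    proof (rule Fint_diff_ge)
      fix u assume u: "z \<le> u" "u \<le> 2 * z"
      have "f u \<le> 2 * f (2 * z)" using almost_inc[of u "2 * z"] z u \<delta> by auto
      then show "1 / (2 * f (2 * z)) \<le> 1 / f u" using pos[of u] u z by (simp add: field_simps)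
    qed (use z \<delta> in auto)
    moreover have "Fint f (2 * z) \<ge> 0" using Fint_nonneg[of "2 * z"] z \<delta> by auto
    moreover have "z / (2 * K * f z) \<le> z * (1 / (2 * f (2 * z)))"
      using double[of z] z \<delta> K pos[of z] pos[of "2 * z"] by (simp add: field_simps)
    ultimately show "z / (2 * K * f z) \<le> Fint f z" by simp
  qed (use \<delta> K in auto)
qed

lemma Fint_comparison:
  assumes rv: "RV0 f \<beta>" and beta: "\<beta> > 1"
  obtains c where "\<And>\<eta>. \<eta> > 0 \<Longrightarrow> \<exists>M \<delta>. M > 0 \<and> \<delta> > 0 \<and>
     (\<forall>z u. 0 < z \<longrightarrow> z \<le> \<delta> \<longrightarrow> 0 < u \<longrightarrow> u \<le> \<delta> \<longrightarrow> M * f z \<le> f u \<longrightarrow> Fint f u \<le> c + \<eta> * Fint f z)"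
proof -
  obtain \<delta>\<^sub>1 C where \<delta>\<^sub>1: "0 < \<delta>\<^sub>1" "\<delta>\<^sub>1 \<le> 1" "C > 0"
    and upper: "\<And>w. 0 < w \<Longrightarrow> w \<le> \<delta>\<^sub>1 \<Longrightarrow> Fint f w \<le> Fint f \<delta>\<^sub>1 + C * w / f w"
    using Fint_upper_bound[OF rv beta] by metis
  obtain \<delta>\<^sub>2 K where \<delta>\<^sub>2: "0 < \<delta>\<^sub>2" "K > 0"
    and lower: "\<And>z. 0 < z \<Longrightarrow> z \<le> \<delta>\<^sub>2 \<Longrightarrow> z / (K * f z) \<le> Fint f z"
    using Fint_lower_bound[OF rv beta] by metis
  show ?thesis
  proof (rule that[of "Fint f \<delta>\<^sub>1"])
    fix \<eta> :: real assume "\<eta> > 0"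
    then have "\<eta> / (C * K) > 0" using \<delta>\<^sub>1 \<delta>\<^sub>2 by simp
    then obtain M \<delta>\<^sub>3 where M: "M > 0" "\<delta>\<^sub>3 > 0" and ratio: "\<And>z u. 0 < z \<Longrightarrow> z \<le> \<delta>\<^sub>3 \<Longrightarrow> 0 < u \<Longrightarrow> u \<le> \<delta>\<^sub>3 \<Longrightarrow>
        M * f z \<le> f u \<Longrightarrow> u * f z \<le> \<eta> / (C * K) * (z * f u)"
      using RV0_dominated_ratio[OF rv cont beta] by metis
    define \<delta> where "\<delta> = min (min \<delta>\<^sub>1 \<delta>\<^sub>2) \<delta>\<^sub>3"
    have \<delta>: "0 < \<delta>" "\<delta> \<le> \<delta>\<^sub>1" "\<delta> \<le> \<delta>\<^sub>2" "\<delta> \<le> \<delta>\<^sub>3" using \<delta>\<^sub>1 \<delta>\<^sub>2 M by (auto simp: \<delta>_def)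
    have "Fint f u \<le> Fint f \<delta>\<^sub>1 + \<eta> * Fint f z"
      if z: "0 < z" "z \<le> \<delta>" and u: "0 < u" "u \<le> \<delta>" and dom: "M * f z \<le> f u" for z u
    proof -
      have fz: "f z > 0" and fu: "f u > 0" using pos z u by auto
      have "u * f z \<le> \<eta> / (C * K) * (z * f u)" using ratio[OF z(1) _ u(1) _ dom] z u \<delta> by simp
      then have "(u * f z) / (f z * f u) \<le> (\<eta> / (C * K) * (z * f u)) / (f z * f u)"
        using fz fu by (intro divide_right_mono) auto
      then have "u / f u \<le> \<eta> / (C * K) * (z / f z)" using fz fu by simp
      then have "C * u / f u \<le> C * (\<eta> / (C * K) * (z / f z))"
        using \<delta>\<^sub>1 by (simp add: mult_left_mono times_divide_eq_right[symmetric] del: times_divide_eq_right)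
      also have "\<dots> = \<eta> * (z / (K * f z))" using \<delta>\<^sub>1 \<delta>\<^sub>2 fz by (simp add: field_simps)
      also have "\<dots> \<le> \<eta> * Fint f z" using lower[of z] z \<delta> \<open>\<eta> > 0\<close> by (intro mult_left_mono) auto
      finally show ?thesis using upper[of u] u \<delta> by simp
    qed
    then show "\<exists>M \<delta>. M > 0 \<and> \<delta> > 0 \<and>
     (\<forall>z u. 0 < z \<longrightarrow> z \<le> \<delta> \<longrightarrow> 0 < u \<longrightarrow> u \<le> \<delta> \<longrightarrow> M * f z \<le> f u \<longrightarrow> Fint f u \<le> Fint f \<delta>\<^sub>1 + \<eta> * Fint f z)"
      using M \<delta> by blast
  qed
qed

end

section \<open>Regularity of the forcing term\<close>

definition almost_decreasing :: "(real \<Rightarrow> real) \<Rightarrow> bool" where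
  "almost_decreasing g \<longleftrightarrow>
     (\<forall>\<epsilon>>0. \<exists>T. \<forall>S t. T \<le> S \<longrightarrow> S \<le> t \<longrightarrow> g t \<le> (1 + \<epsilon>) * g S)"

definition almost_increasing_locally :: "(real \<Rightarrow> real) \<Rightarrow> bool" where
  "almost_increasing_locally g \<longleftrightarrow>
     (\<forall>\<epsilon>>0. \<exists>\<delta>>0. \<exists>T. \<forall>S t. T \<le> t \<longrightarrow> (1 - \<delta>) * t \<le> S \<longrightarrow> S \<le> t \<longrightarrow> g S \<le> (1 + \<epsilon>) * g t)"

lemma RVinf_pos: "RVinf g \<alpha> \<Longrightarrow> t > 0 \<Longrightarrow> g t > 0"
  by (auto simp: RVinf_def)

lemma RVinf_uniform:
  assumes cont: "continuous_on {0<..} g" and rv: "RVinf g \<alpha>" and eta: "\<eta> > 0"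
  obtains T where "T > 0"
    "\<And>t s. T \<le> t \<Longrightarrow> 0 \<le> s \<Longrightarrow> s \<le> 1 \<Longrightarrow> \<bar>ln (g (exp s * t)) - ln (g t) - \<alpha> * s\<bar> \<le> \<eta>"
proof -
  have "eventually (\<lambda>t. \<forall>s\<in>{0..1}. \<bar>ln (g (exp s * t)) - ln (g t) - \<alpha> * s\<bar> \<le> \<eta>) at_top"
    using rv by (intro regular_variation_uniform[OF cont _ _ eta]) (auto simp: RVinf_def)
  then obtain T where "\<And>t s. T \<le> t \<Longrightarrow> s \<in> {0..1} \<Longrightarrow> \<bar>ln (g (exp s * t)) - ln (g t) - \<alpha> * s\<bar> \<le> \<eta>"
    unfolding eventually_at_top_linorder by blast
  then show ?thesis by (intro that[of "max T 1"]) auto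
qed

lemma le_mult_of_ln_le:
  fixes x y \<epsilon> :: real
  assumes "x > 0" "y > 0" "\<epsilon> > 0" "ln x \<le> ln y + ln (1 + \<epsilon>)"
  shows "x \<le> (1 + \<epsilon>) * y"
proof -
  have "ln ((1 + \<epsilon>) * y) = ln y + ln (1 + \<epsilon>)" using assms ln_mult[of "1 + \<epsilon>" y] by simp
  then have "ln x \<le> ln ((1 + \<epsilon>) * y)" using assms by simp
  then show ?thesis using assms by simp
qed

lemma window_scale_le:
  fixes \<delta> t S :: real
  assumes "0 \<le> \<delta>" "\<delta> \<le> 1/2" "0 \<le> t" "(1 - \<delta>) * t \<le> S"
  shows "t \<le> (1 + 2 * \<delta>) * S"
proof -
  have "1 \<le> (1 + 2 * \<delta>) * (1 - \<delta>)"
    using mult_nonneg_nonneg[of \<delta> "1 - 2 * \<delta>"] assms by (simp add: algebra_simps)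
  then have "1 * t \<le> ((1 + 2 * \<delta>) * (1 - \<delta>)) * t" using assms by (intro mult_right_mono) auto
  then have "t \<le> (1 + 2 * \<delta>) * ((1 - \<delta>) * t)" by (simp only: mult.assoc mult_1_left)
  also have "\<dots> \<le> (1 + 2 * \<delta>) * S" using assms by (intro mult_left_mono) auto
  finally show ?thesis .
qed

lemma RVinf_almost_increasing_locally:
  assumes cont: "continuous_on {0<..} g" and rv: "RVinf g \<alpha>"
  shows "almost_increasing_locally g"
  unfolding almost_increasing_locally_def
proof (intro allI impI)
  fix \<epsilon> :: real assume eps: "\<epsilon> > 0"
  define \<eta> where "\<eta> = ln (1 + \<epsilon>) / 2"
  have eta: "\<eta> > 0" using eps by (simp add: \<eta>_def)
  obtain T where T: "T > 0"
    and unif: "\<And>t s. T \<le> t \<Longrightarrow> 0 \<le> s \<Longrightarrow> s \<le> 1 \<Longrightarrow> \<bar>ln (g (exp s * t)) - ln (g t) - \<alpha> * s\<bar> \<le> \<eta>"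
    using RVinf_uniform[OF cont rv eta] by metis
  define \<delta> where "\<delta> = min (1/2) (\<eta> / (2 * \<bar>\<alpha>\<bar> + 1))"
  have \<delta>: "\<delta> > 0" "\<delta> \<le> 1/2" using eta unfolding \<delta>_def by (simp, linarith)
  have "2 * \<bar>\<alpha>\<bar> * \<delta> \<le> (2 * \<bar>\<alpha>\<bar> + 1) * (\<eta> / (2 * \<bar>\<alpha>\<bar> + 1))"
    using \<delta> by (intro mult_mono) (auto simp: \<delta>_def)
  then have \<alpha>\<delta>: "2 * \<bar>\<alpha>\<bar> * \<delta> \<le> \<eta>" by (simp add: add_pos_nonneg)
  have "g S \<le> (1 + \<epsilon>) * g t" if t: "2 * T \<le> t" and S: "(1 - \<delta>) * t \<le> S" "S \<le> t" for S t
  proof -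
    have "t / 2 \<le> (1 - \<delta>) * t" using \<delta> t T by (simp add: field_simps)
    then have S_pos: "T \<le> S" "S > 0" using S t T by linarith+
    define s where "s = ln (t / S)"
    have "t \<le> (1 + 2 * \<delta>) * S" using \<delta> t T S by (intro window_scale_le) auto
    then have "t / S \<le> 1 + 2 * \<delta>" using S_pos by (simp add: divide_le_eq)
    then have s: "0 \<le> s" "s \<le> 2 * \<delta>"
      using S S_pos ln_le_minus_one[of "t / S"] by (auto simp: s_def)
    have "exp s * S = t" using S_pos S by (simp add: s_def)
    then have "\<bar>ln (g t) - ln (g S) - \<alpha> * s\<bar> \<le> \<eta>" using unif[OF S_pos(1) s(1)] s \<delta> by simp
    moreover have "- \<alpha> * s \<le> \<bar>\<alpha>\<bar> * s" using s by (intro mult_right_mono) auto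
    moreover have "\<bar>\<alpha>\<bar> * s \<le> \<bar>\<alpha>\<bar> * (2 * \<delta>)" using s by (intro mult_left_mono) auto
    ultimately have "ln (g S) \<le> ln (g t) + ln (1 + \<epsilon>)" using \<alpha>\<delta> unfolding \<eta>_def by linarith
    then show "g S \<le> (1 + \<epsilon>) * g t"
      using S_pos S t T RVinf_pos[OF rv] eps by (intro le_mult_of_ln_le) auto
  qed
  then show "\<exists>\<delta>>0. \<exists>T. \<forall>S t. T \<le> t \<longrightarrow> (1 - \<delta>) * t \<le> S \<longrightarrow> S \<le> t \<longrightarrow> g S \<le> (1 + \<epsilon>) * g t"
    using \<delta>(1) by blast
qed

lemma RVinf_negative_almost_decreasing:
  assumes cont: "continuous_on {0<..} g" and rv: "RVinf g \<alpha>" and neg: "\<alpha> < 0"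
  shows "almost_decreasing g"
  unfolding almost_decreasing_def
proof (intro allI impI)
  fix \<epsilon> :: real assume eps: "\<epsilon> > 0"
  define \<eta> where "\<eta> = min (- \<alpha>) (ln (1 + \<epsilon>))"
  have eta: "\<eta> > 0" "\<eta> \<le> - \<alpha>" "\<eta> \<le> ln (1 + \<epsilon>)" using neg eps by (auto simp: \<eta>_def)
  obtain T where T: "T > 0"
    and unif: "\<And>t s. T \<le> t \<Longrightarrow> 0 \<le> s \<Longrightarrow> s \<le> 1 \<Longrightarrow> \<bar>ln (g (exp s * t)) - ln (g t) - \<alpha> * s\<bar> \<le> \<eta>"
    using RVinf_uniform[OF cont rv eta(1)] by metis
  have short: "ln (g (exp s * S)) \<le> ln (g S) + \<alpha> * s + \<eta>" if "T \<le> S" "0 \<le> s" "s \<le> 1" for S s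
    using unif[OF that] by linarith
  \<comment> \<open>over each step \<open>S \<mapsto> exp 1 * S\<close> the drift \<open>\<alpha> \<le> - \<eta>\<close> absorbs the error \<open>\<eta>\<close>, so the
    errors do not accumulate\<close>
  have long: "ln (g t) \<le> ln (g S) + \<eta>" if "T \<le> S" "S \<le> t" "t \<le> exp (real n) * S" for n S t
    using that
  proof (induction n arbitrary: S)
    case 0
    then show ?case using eta by simp
  next
    case (Suc n)
    have S: "S > 0" using Suc.prems T by linarith
    show ?case
    proof (cases "t \<le> exp 1 * S")
      case True
      have "exp (ln (t / S)) * S = t" using S Suc.prems by simp
      moreover have "1 \<le> t / S" "t / S \<le> exp 1"
        using True S Suc.prems by (simp_all add: divide_le_eq mult.commute)
      then have "0 \<le> ln (t / S)" "ln (t / S) \<le> ln (exp 1)"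
        using S by (simp_all del: ln_exp)
      moreover have "\<alpha> * ln (t / S) \<le> 0"
        using neg \<open>0 \<le> ln (t / S)\<close> by (simp add: mult_nonpos_nonneg)
      ultimately show ?thesis using short[OF Suc.prems(1), of "ln (t / S)"] by simp
    next
      case False
      have "S \<le> exp 1 * S" using S by simp
      then have "ln (g t) \<le> ln (g (exp 1 * S)) + \<eta>"
        using False Suc.prems by (intro Suc.IH) (auto simp: exp_add mult_ac)
      also have "\<dots> \<le> ln (g S) + \<eta>" using short[OF Suc.prems(1), of 1] eta by simp
      finally show ?thesis .
    qed
  qed
  show "\<exists>T. \<forall>S t. T \<le> S \<longrightarrow> S \<le> t \<longrightarrow> g t \<le> (1 + \<epsilon>) * g S"
  proof (intro exI[of _ T] allI impI)
    fix S t assume S: "T \<le> S" "S \<le> t"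
    obtain n where "t / S \<le> real n" using real_arch_simple by blast
    then have "t \<le> real n * S" using S T by (simp add: divide_le_eq)
    also have "\<dots> \<le> exp (real n) * S"
      using S T exp_ge_add_one_self[of "real n"] by (intro mult_right_mono) linarith+
    finally have "t \<le> exp (real n) * S" .
    then have "ln (g t) \<le> ln (g S) + ln (1 + \<epsilon>)" using long[OF S] eta by fastforce
    then show "g t \<le> (1 + \<epsilon>) * g S"
      using S T RVinf_pos[OF rv] eps by (intro le_mult_of_ln_le) auto
  qed
qed

lemma almost_decreasing_if_asymp_decreasing:
  fixes g \<gamma> :: "real \<Rightarrow> real"
  assumes pos: "\<And>t. t > 0 \<Longrightarrow> g t > 0" and lim: "((\<lambda>t. g t / \<gamma> t) \<longlongrightarrow> 1) at_top"
    and dec: "\<forall>s t. 0 \<le> s \<longrightarrow> s \<le> t \<longrightarrow> \<gamma> t \<le> \<gamma> s"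
  shows "almost_decreasing g"
  unfolding almost_decreasing_def
proof (intro allI impI)
  fix \<epsilon> :: real assume eps: "\<epsilon> > 0"
  \<comment> \<open>chosen so that \<open>(1 + e) / (1 - e) = 1 + \<epsilon>\<close>\<close>
  define e where "e = \<epsilon> / (2 + \<epsilon>)"
  have e: "0 < e" "e < 1" "1 + e = (1 + \<epsilon>) * (1 - e)" using eps by (auto simp: e_def field_simps)
  obtain T where T: "\<And>t. t \<ge> T \<Longrightarrow> \<bar>g t / \<gamma> t - 1\<bar> < e"
    using tendstoD[OF lim e(1)] by (auto simp: eventually_at_top_linorder dist_real_def)
  then have near: "(1 - e) * \<gamma> t \<le> g t \<and> g t \<le> (1 + e) * \<gamma> t" if "t \<ge> max T 1" for t
  proof -
    have q: "1 - e < g t / \<gamma> t" "g t / \<gamma> t < 1 + e" using T[of t] that by auto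
    have "\<gamma> t > 0"
    proof (rule ccontr)
      assume "\<not> \<gamma> t > 0"
      then have "g t / \<gamma> t \<le> 0" using pos[of t] that by (simp add: divide_nonneg_nonpos)
      then show False using q e by linarith
    qed
    then show ?thesis using q by (simp add: field_simps)
  qed
  show "\<exists>T. \<forall>S t. T \<le> S \<longrightarrow> S \<le> t \<longrightarrow> g t \<le> (1 + \<epsilon>) * g S"
  proof (intro exI[of _ "max T 1"] allI impI)
    fix S t assume S: "max T 1 \<le> S" "S \<le> t"
    have "(1 - e) * g t \<le> (1 - e) * ((1 + e) * \<gamma> t)" using near[of t] S e by (intro mult_left_mono) auto
    also have "\<dots> = (1 + e) * ((1 - e) * \<gamma> t)" by (simp only: mult_ac)
    also have "\<dots> \<le> (1 + e) * ((1 - e) * \<gamma> S)" using dec S e(1,2) by (intro mult_left_mono) auto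
    also have "\<dots> \<le> (1 + e) * g S" using near[of S] S e by (intro mult_left_mono) auto
    also have "\<dots> = (1 - e) * ((1 + \<epsilon>) * g S)" using e by simp
    finally show "g t \<le> (1 + \<epsilon>) * g S" using e by simp
  qed
qed

section \<open>Asymptotics of the solution\<close>

lemma DERIV_ge_imp_increment_ge:
  fixes \<Phi> \<Phi>' :: "real \<Rightarrow> real"
  assumes "a \<le> b" and der: "\<And>s. a \<le> s \<Longrightarrow> s \<le> b \<Longrightarrow> (\<Phi> has_real_derivative \<Phi>' s) (at s)"
    and ge: "\<And>s. a < s \<Longrightarrow> s < b \<Longrightarrow> c \<le> \<Phi>' s"
  shows "c * (b - a) \<le> \<Phi> b - \<Phi> a"
proof -
  have "\<Phi> a - c * a \<le> \<Phi> b - c * b"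
  proof (rule DERIV_nonneg_imp_increasing_open[OF \<open>a \<le> b\<close>])
    fix s assume "a < s" "s < b"
    then show "\<exists>y. ((\<lambda>s. \<Phi> s - c * s) has_real_derivative y) (at s) \<and> 0 \<le> y"
      using der[of s] ge[of s] by (intro exI[of _ "\<Phi>' s - c"]) (auto intro!: derivative_eq_intros)
  next
    show "continuous_on {a..b} (\<lambda>s. \<Phi> s - c * s)"
      using der by (intro continuous_intros continuous_at_imp_continuous_on) (meson DERIV_isCont atLeastAtMost_iff)
  qed
  then show ?thesis by (simp add: algebra_simps)
qed

lemma last_crossing:
  fixes \<phi> :: "real \<Rightarrow> real"
  assumes cont: "continuous_on {a..b} \<phi>" and "a \<le> b"
  obtains S where "a \<le> S" "S \<le> b" "S = a \<or> \<phi> S \<le> c" "\<And>s. S < s \<Longrightarrow> s \<le> b \<Longrightarrow> c < \<phi> s"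
proof (cases "{s\<in>{a..b}. \<phi> s \<le> c} = {}")
  case True
  then show ?thesis using that[of a] \<open>a \<le> b\<close> by fastforce
next
  case False
  define A where "A = {s\<in>{a..b}. \<phi> s \<le> c}"
  have "closed ({a..b} \<inter> \<phi> -` {..c})" by (rule continuous_closed_preimage[OF cont]) auto
  moreover have "A = {a..b} \<inter> \<phi> -` {..c}" by (auto simp: A_def)
  ultimately have "closed A" by simp
  moreover have "bdd_above A" by (auto simp: A_def intro: bdd_aboveI[of _ b])
  ultimately have "Sup A \<in> A" using False by (intro closed_contains_Sup) (auto simp: A_def)
  moreover have "c < \<phi> s" if "Sup A < s" "s \<le> b" for s
    using cSup_upper[OF _ \<open>bdd_above A\<close>, of s] that \<open>Sup A \<in> A\<close> by (force simp: A_def)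
  ultimately show ?thesis using that[of "Sup A"] by (auto simp: A_def)
qed

lemma tendsto_1_if_cube_bounds:
  fixes r :: "'a \<Rightarrow> real"
  assumes bounds: "\<And>\<epsilon>. \<epsilon> > 0 \<Longrightarrow> eventually (\<lambda>t. 1 / (1 + \<epsilon>) ^ 3 \<le> r t \<and> r t \<le> (1 + \<epsilon>) ^ 3) F"
  shows "(r \<longlongrightarrow> 1) F"
proof (rule tendstoI)
  fix e :: real assume "e > 0"
  have "((\<lambda>\<epsilon>. (1 + \<epsilon>) ^ 3) \<longlongrightarrow> 1) (at_right (0::real))"
    "((\<lambda>\<epsilon>. 1 / (1 + \<epsilon>) ^ 3) \<longlongrightarrow> 1) (at_right (0::real))"
    by (auto intro!: tendsto_eq_intros)
  then have "eventually (\<lambda>\<epsilon>. (1 + \<epsilon>) ^ 3 < 1 + e \<and> 1 - e < 1 / (1 + \<epsilon>) ^ 3) (at_right 0)"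
    using \<open>e > 0\<close> by (auto intro!: eventually_conj order_tendstoD)
  then obtain \<epsilon> :: real where "\<epsilon> > 0" "(1 + \<epsilon>) ^ 3 < 1 + e" "1 - e < 1 / (1 + \<epsilon>) ^ 3"
    unfolding eventually_at_right_field by (metis half_gt_zero less_add_same_cancel1 field_sum_of_halves)
  with bounds[OF \<open>\<epsilon> > 0\<close>] show "eventually (\<lambda>t. dist (r t) 1 < e) F"
    by (auto simp: dist_real_def abs_less_iff elim: eventually_mono)
qed

lemma ODE_solution_positive:
  fixes f g x :: "real \<Rightarrow> real"
  assumes f_nonpos: "\<And>y. y \<le> 0 \<Longrightarrow> f y \<le> 0" and g_pos: "\<And>t. t > 0 \<Longrightarrow> g t > 0"
    and cont: "continuous_on {0..} x" and init: "x 0 > 0"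
    and ode: "\<And>t. t > 0 \<Longrightarrow> (x has_real_derivative (- f (x t) + g t)) (at t)"
    and "t\<^sub>1 \<ge> 0"
  shows "x t\<^sub>1 > 0"
proof (rule ccontr)
  assume "\<not> x t\<^sub>1 > 0"
  \<comment> \<open>at the first time \<open>t\<^sub>0\<close> with \<open>x t\<^sub>0 \<le> 0\<close> the derivative \<open>- f (x t\<^sub>0) + g t\<^sub>0\<close> is positive,
    so \<open>x\<close> was already \<open>\<le> 0\<close> slightly earlier\<close>
  define A where "A = {s\<in>{0..t\<^sub>1}. x s \<le> 0}"
  have "A \<noteq> {}" using \<open>\<not> x t\<^sub>1 > 0\<close> \<open>t\<^sub>1 \<ge> 0\<close> by (auto simp: A_def)
  have "closed ({0..t\<^sub>1} \<inter> x -` {..0})"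
    by (rule continuous_closed_preimage[OF continuous_on_subset[OF cont]]) auto
  moreover have "A = {0..t\<^sub>1} \<inter> x -` {..0}" by (auto simp: A_def)
  ultimately have "closed A" by simp
  have "bdd_below A" by (auto simp: A_def intro: bdd_belowI[of _ 0])
  define t\<^sub>0 where "t\<^sub>0 = Inf A"
  have "t\<^sub>0 \<in> A" unfolding t\<^sub>0_def by (rule closed_contains_Inf[OF \<open>A \<noteq> {}\<close> \<open>bdd_below A\<close> \<open>closed A\<close>])
  then have t\<^sub>0: "0 \<le> t\<^sub>0" "t\<^sub>0 \<le> t\<^sub>1" "x t\<^sub>0 \<le> 0" by (auto simp: A_def)
  have "t\<^sub>0 > 0" using t\<^sub>0 init by (metis less_eq_real_def not_le)
  have "- f (x t\<^sub>0) + g t\<^sub>0 > 0" using f_nonpos[OF t\<^sub>0(3)] g_pos[OF \<open>t\<^sub>0 > 0\<close>] by linarith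
  then obtain d where "d > 0" and before: "\<And>h. h > 0 \<Longrightarrow> h < d \<Longrightarrow> x (t\<^sub>0 - h) < x t\<^sub>0"
    using DERIV_pos_inc_left[OF ode[OF \<open>t\<^sub>0 > 0\<close>]] by blast
  define h where "h = min (d / 2) (t\<^sub>0 / 2)"
  have h: "h > 0" "h < d" "h < t\<^sub>0" using \<open>d > 0\<close> \<open>t\<^sub>0 > 0\<close> by (auto simp: h_def)
  then have "t\<^sub>0 - h \<in> A" using before[of h] t\<^sub>0 by (auto simp: A_def)
  then have "t\<^sub>0 \<le> t\<^sub>0 - h" unfolding t\<^sub>0_def using \<open>bdd_below A\<close> by (rule cInf_lower)
  then show False using h by simp
qed

locale ode_asymptotics = rate_function f for f +
  fixes g x :: "real \<Rightarrow> real" and \<beta> :: real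
  assumes f_RV: "RV0 f \<beta>" and beta: "\<beta> > 1"
    and F_lim: "filterlim (Fint f) at_top (at_right 0)"
    and g_cont: "continuous_on {0<..} g" and g_pos: "\<And>t. t > 0 \<Longrightarrow> g t > 0"
    and x_pos: "\<And>t. t > 0 \<Longrightarrow> x t > 0"
    and x_ode: "\<And>t. t > 0 \<Longrightarrow> (x has_real_derivative (- f (x t) + g t)) (at t)"
    and x_lim: "(x \<longlongrightarrow> 0) at_top"
    and g_big: "filterlim (\<lambda>t. g t / f (Finv f t)) at_top at_top"
begin

lemma continuous_on_f_x: "0 < a \<Longrightarrow> continuous_on {a..b} (\<lambda>s. f (x s))"
proof -
  assume "0 < a"
  then have "continuous_on {a..b} x"
    using x_ode by (intro continuous_at_imp_continuous_on) (meson DERIV_isCont atLeastAtMost_iff less_le_trans)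
  then show ?thesis using x_pos \<open>0 < a\<close> by (intro continuous_on_compose2[OF cont]) auto
qed

lemma continuous_on_g: "0 < a \<Longrightarrow> continuous_on {a..b} g"
  by (rule continuous_on_subset[OF g_cont]) auto

lemma has_real_derivative_Fint_x:
  assumes "t > 0" "x t < 1"
  shows "((\<lambda>s. Fint f (x s)) has_real_derivative 1 - g t / f (x t)) (at t)"
proof -
  have "((\<lambda>s. Fint f (x s)) has_real_derivative (- (1 / f (x t))) * (- f (x t) + g t)) (at t)"
    using assms x_pos by (intro DERIV_chain2[OF has_real_derivative_Fint x_ode]) auto
  moreover have "(- (1 / f (x t))) * (- f (x t) + g t) = 1 - g t / f (x t)"
    using pos[OF x_pos[OF assms(1)]] by (simp add: field_simps)
  ultimately show ?thesis by simp
qed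

lemma Fint_x_increment_ge:
  assumes "0 < S" "S \<le> t" "\<And>s. S \<le> s \<Longrightarrow> s \<le> t \<Longrightarrow> x s < 1" "\<epsilon> > 0"
    and above: "\<And>s. S < s \<Longrightarrow> s < t \<Longrightarrow> (1 + \<epsilon>) * g s < f (x s)"
  shows "\<epsilon> / (1 + \<epsilon>) * (t - S) \<le> Fint f (x t) - Fint f (x S)"
proof (rule DERIV_ge_imp_increment_ge[OF \<open>S \<le> t\<close>])
  fix s assume "S \<le> s" "s \<le> t"
  then show "((\<lambda>s. Fint f (x s)) has_real_derivative 1 - g s / f (x s)) (at s)"
    using assms by (intro has_real_derivative_Fint_x) auto
next
  fix s assume "S < s" "s < t"
  then have "(1 + \<epsilon>) * g s < f (x s)" "0 < g s" "0 < f (x s)"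
    using above[of s] g_pos[of s] pos[OF x_pos[of s]] \<open>0 < S\<close> by auto
  then show "\<epsilon> / (1 + \<epsilon>) \<le> 1 - g s / f (x s)" using \<open>\<epsilon> > 0\<close> by (simp add: field_simps)
qed

lemma x_increasing:
  assumes "0 < a" "a \<le> b" "\<And>s. a < s \<Longrightarrow> s < b \<Longrightarrow> f (x s) \<le> g s"
  shows "x a \<le> x b"
  using DERIV_ge_imp_increment_ge[of a b x "\<lambda>s. - f (x s) + g s" 0] assms x_ode by auto

lemma x_decreasing:
  assumes "0 < a" "a \<le> b" "\<And>s. a < s \<Longrightarrow> s < b \<Longrightarrow> g s \<le> f (x s)"
  shows "x b \<le> x a"
proof -
  have "((\<lambda>s. - x s) has_real_derivative f (x s) - g s) (at s)" if "a \<le> s" for s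
    using DERIV_minus[OF x_ode[of s]] that assms(1) by simp
  then show ?thesis using DERIV_ge_imp_increment_ge[of a b "\<lambda>s. - x s" "\<lambda>s. f (x s) - g s" 0] assms by auto
qed

lemma x_small:
  assumes "\<delta> > 0"
  obtains T where "T \<ge> 1" "\<And>s. s \<ge> T \<Longrightarrow> 0 < x s \<and> x s \<le> \<delta>"
proof -
  obtain T where "\<And>s. s \<ge> T \<Longrightarrow> x s < \<delta>"
    using order_tendstoD(2)[OF x_lim assms] by (auto simp: eventually_at_top_linorder)
  then show ?thesis using x_pos by (intro that[of "max T 1"]) (auto intro: less_imp_le)
qed

text \<open>Whenever \<open>x\<close> is above its quasi-equilibrium, \<open>F (x t)\<close> is \<open>o(t)\<close>: the hypothesis
  \<open>g t / f (Finv f t) \<rightarrow> \<infinity>\<close> makes \<open>f (x t)\<close> dominate \<open>f (Finv f t)\<close>, and \<open>F (Finv f t) = t\<close>.\<close>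
lemma eventually_Fint_x_small:
  assumes eta: "\<eta> > 0"
  shows "eventually (\<lambda>t. g t \<le> f (x t) \<longrightarrow> Fint f (x t) \<le> \<eta> * t) at_top"
proof -
  obtain c where comparison: "\<And>\<eta>. \<eta> > 0 \<Longrightarrow> \<exists>M \<delta>. M > 0 \<and> \<delta> > 0 \<and>
     (\<forall>z u. 0 < z \<longrightarrow> z \<le> \<delta> \<longrightarrow> 0 < u \<longrightarrow> u \<le> \<delta> \<longrightarrow> M * f z \<le> f u \<longrightarrow> Fint f u \<le> c + \<eta> * Fint f z)"
    using Fint_comparison[OF f_RV beta] by metis
  obtain M \<delta> where "M > 0" "\<delta> > 0" and dom: "\<And>z u. 0 < z \<Longrightarrow> z \<le> \<delta> \<Longrightarrow> 0 < u \<Longrightarrow> u \<le> \<delta> \<Longrightarrow>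
      M * f z \<le> f u \<Longrightarrow> Fint f u \<le> c + \<eta> / 2 * Fint f z"
    using comparison[of "\<eta> / 2"] eta by auto
  obtain T where T: "\<And>s. s \<ge> T \<Longrightarrow> 0 < x s \<and> x s \<le> \<delta>" using x_small[OF \<open>\<delta> > 0\<close>] by metis
  have "eventually (\<lambda>t. Finv f t \<le> min \<delta> 1) at_top"
    using \<open>\<delta> > 0\<close> by (intro eventually_Finv_le[OF F_lim]) auto
  moreover have "eventually (\<lambda>t. M \<le> g t / f (Finv f t)) at_top"
    using g_big by (simp add: filterlim_at_top)
  ultimately show ?thesis
    using eventually_ge_at_top[of T] eventually_gt_at_top[of 0] eventually_ge_at_top[of "2 * \<bar>c\<bar> / \<eta>"]
  proof eventually_elim
    case (elim t)
    then have t: "t > 0" "\<bar>c\<bar> \<le> \<eta> / 2 * t" using eta by (auto simp: field_simps)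
    have Finv: "0 < Finv f t" "Fint f (Finv f t) = t" using Finv_spec[OF F_lim t(1)] by auto
    show ?case
    proof
      assume "g t \<le> f (x t)"
      moreover have "M * f (Finv f t) \<le> g t" using elim pos[OF Finv(1)] by (simp add: field_simps)
      ultimately have "Fint f (x t) \<le> c + \<eta> / 2 * t"
        using dom[of "Finv f t" "x t"] Finv T[of t] elim by auto
      with t show "Fint f (x t) \<le> \<eta> * t" by linarith
    qed
  qed
qed

lemma eventually_f_x_le:
  assumes inc: "almost_increasing_locally g" and eps: "\<epsilon> > 0"
  shows "eventually (\<lambda>t. f (x t) \<le> (1 + \<epsilon>) ^ 3 * g t) at_top"
proof -
  obtain \<delta>\<^sub>1 where "\<delta>\<^sub>1 > 0" and f_inc: "\<And>z u. 0 < z \<Longrightarrow> z \<le> u \<Longrightarrow> u \<le> \<delta>\<^sub>1 \<Longrightarrow> f z \<le> (1 + \<epsilon>) * f u"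
    using RV0_almost_increasing[OF f_RV cont beta eps] by metis
  obtain \<delta>\<^sub>2 T\<^sub>2 where "\<delta>\<^sub>2 > 0"
    and g_inc: "\<And>S t. T\<^sub>2 \<le> t \<Longrightarrow> (1 - \<delta>\<^sub>2) * t \<le> S \<Longrightarrow> S \<le> t \<Longrightarrow> g S \<le> (1 + \<epsilon>) * g t"
    using inc eps unfolding almost_increasing_locally_def by metis
  define \<delta> where "\<delta> = min \<delta>\<^sub>2 (1/2)"
  define c where "c = \<epsilon> / (1 + \<epsilon>)"
  have \<delta>: "0 < \<delta>" "\<delta> \<le> \<delta>\<^sub>2" "\<delta> \<le> 1/2" and c: "c > 0"
    using \<open>\<delta>\<^sub>2 > 0\<close> eps by (auto simp: \<delta>_def c_def)
  obtain T\<^sub>0 where T\<^sub>0: "T\<^sub>0 \<ge> 1" and x_T\<^sub>0: "\<And>s. s \<ge> T\<^sub>0 \<Longrightarrow> 0 < x s \<and> x s \<le> min \<delta>\<^sub>1 (1/2)"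
    using x_small[of "min \<delta>\<^sub>1 (1/2)"] \<open>\<delta>\<^sub>1 > 0\<close> by auto
  have cube: "1 \<le> (1 + \<epsilon>) ^ 3" using eps by simp
  show ?thesis
    using eventually_Fint_x_small[OF mult_pos_pos[OF c \<delta>(1)]]
      eventually_gt_at_top[of "2 * T\<^sub>0"] eventually_ge_at_top[of T\<^sub>2]
  proof eventually_elim
    case (elim t)
    show ?case
    proof (rule ccontr)
      assume "\<not> f (x t) \<le> (1 + \<epsilon>) ^ 3 * g t"
      moreover have "g t \<le> (1 + \<epsilon>) ^ 3 * g t" using cube g_pos[of t] elim T\<^sub>0 by simp
      ultimately have "g t \<le> f (x t)" "f (x t) > (1 + \<epsilon>) ^ 3 * g t" by auto
      with elim have F_t: "Fint f (x t) \<le> c * \<delta> * t" by blast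
      have "continuous_on {T\<^sub>0..t} (\<lambda>s. f (x s) - (1 + \<epsilon>) * g s)"
        using T\<^sub>0 by (intro continuous_intros continuous_on_f_x continuous_on_g) auto
      moreover have "T\<^sub>0 \<le> t" using elim T\<^sub>0 by linarith
      ultimately obtain S where S: "T\<^sub>0 \<le> S" "S \<le> t" "S = T\<^sub>0 \<or> f (x S) - (1 + \<epsilon>) * g S \<le> 0"
        and above: "\<And>s. S < s \<Longrightarrow> s \<le> t \<Longrightarrow> 0 < f (x s) - (1 + \<epsilon>) * g s"
        by (rule last_crossing[where c = 0]) blast
      \<comment> \<open>above the level \<open>1 + \<epsilon>\<close>, \<open>F (x s)\<close> grows at rate at least \<open>c\<close>; since \<open>F (x t)\<close> is
        \<open>O(\<delta> t)\<close>, the excursion above that level started late, at \<open>S \<ge> (1 - \<delta>) t\<close>\<close>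
      have "c * (t - S) \<le> Fint f (x t) - Fint f (x S)"
      proof (unfold c_def, rule Fint_x_increment_ge[OF _ S(2) _ eps])
        show "x s < 1" if "S \<le> s" for s using x_T\<^sub>0[of s] that S by auto
        show "(1 + \<epsilon>) * g s < f (x s)" if "S < s" "s < t" for s using above[of s] that by auto
      qed (use S T\<^sub>0 in auto)
      moreover have "Fint f (x S) \<ge> 0" using x_T\<^sub>0[of S] S by (intro Fint_nonneg) auto
      ultimately have "c * (t - S) \<le> c * (\<delta> * t)" using F_t by (simp add: algebra_simps)
      then have "t - S \<le> \<delta> * t" using c by simp
      moreover have "\<delta> * t \<le> \<delta>\<^sub>2 * t" "\<delta> * t \<le> t / 2" using \<delta> elim T\<^sub>0 by (auto intro: mult_right_mono)
      ultimately have "(1 - \<delta>\<^sub>2) * t \<le> S" "S \<noteq> T\<^sub>0" using elim by (auto simp: algebra_simps)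
      then have g_S: "f (x S) \<le> (1 + \<epsilon>) * g S" "g S \<le> (1 + \<epsilon>) * g t"
        using S g_inc[of t S] elim by auto
      have "g s \<le> f (x s)" if "S < s" "s < t" for s
      proof -
        have "1 * g s \<le> (1 + \<epsilon>) * g s" using g_pos[of s] that S T\<^sub>0 eps by (intro mult_right_mono) auto
        then show ?thesis using above[of s] that by simp
      qed
      then have "x t \<le> x S" using S T\<^sub>0 by (intro x_decreasing) auto
      then have "f (x t) \<le> (1 + \<epsilon>) * f (x S)" using x_T\<^sub>0[of t] x_T\<^sub>0[of S] S elim T\<^sub>0 by (intro f_inc) auto
      also have "\<dots> \<le> (1 + \<epsilon>) * ((1 + \<epsilon>) * ((1 + \<epsilon>) * g t))"
        using g_S eps by (intro mult_left_mono order.trans[OF g_S(1)]) auto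
      finally show False using \<open>f (x t) > (1 + \<epsilon>) ^ 3 * g t\<close> by (simp add: power3_eq_cube mult_ac)
    qed
  qed
qed

lemma eventually_g_le:
  assumes dec: "almost_decreasing g" and eps: "\<epsilon> > 0"
  shows "eventually (\<lambda>t. g t \<le> (1 + \<epsilon>) ^ 3 * f (x t)) at_top"
proof -
  obtain \<delta>\<^sub>1 where "\<delta>\<^sub>1 > 0" and f_inc: "\<And>z u. 0 < z \<Longrightarrow> z \<le> u \<Longrightarrow> u \<le> \<delta>\<^sub>1 \<Longrightarrow> f z \<le> (1 + \<epsilon>) * f u"
    using RV0_almost_increasing[OF f_RV cont beta eps] by metis
  obtain T\<^sub>1 where g_dec: "\<And>S t. T\<^sub>1 \<le> S \<Longrightarrow> S \<le> t \<Longrightarrow> g t \<le> (1 + \<epsilon>) * g S"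
    using dec eps unfolding almost_decreasing_def by metis
  obtain T where "T \<ge> 1" and x_T: "\<And>s. s \<ge> T \<Longrightarrow> 0 < x s \<and> x s \<le> \<delta>\<^sub>1"
    using x_small[OF \<open>\<delta>\<^sub>1 > 0\<close>] by metis
  define T\<^sub>0 where "T\<^sub>0 = max T T\<^sub>1"
  have T\<^sub>0: "T\<^sub>0 \<ge> 1" "T\<^sub>0 \<ge> T\<^sub>1" and x_T\<^sub>0: "\<And>s. s \<ge> T\<^sub>0 \<Longrightarrow> 0 < x s \<and> x s \<le> \<delta>\<^sub>1"
    using \<open>T \<ge> 1\<close> x_T by (auto simp: T\<^sub>0_def)
  have "eventually (\<lambda>t. x t < x T\<^sub>0) at_top"
    using order_tendstoD(2)[OF x_lim] x_T\<^sub>0[of T\<^sub>0] by auto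
  then show ?thesis
    using eventually_ge_at_top[of T\<^sub>0]
  proof eventually_elim
    case (elim t)
    show ?case
    proof (rule ccontr)
      assume "\<not> g t \<le> (1 + \<epsilon>) ^ 3 * f (x t)"
      have "continuous_on {T\<^sub>0..t} (\<lambda>s. g s - (1 + \<epsilon>) * f (x s))"
        using T\<^sub>0 by (intro continuous_intros continuous_on_f_x continuous_on_g) auto
      then obtain S where S: "T\<^sub>0 \<le> S" "S \<le> t" "S = T\<^sub>0 \<or> g S - (1 + \<epsilon>) * f (x S) \<le> 0"
        and below: "\<And>s. S < s \<Longrightarrow> s \<le> t \<Longrightarrow> 0 < g s - (1 + \<epsilon>) * f (x s)"
        using elim(2) by (rule last_crossing[where c = 0]) blast
      \<comment> \<open>below the level \<open>1 / (1 + \<epsilon>)\<close> the solution increases, which rules out \<open>S = T\<^sub>0\<close>\<close>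
      have "f (x s) \<le> g s" if "S < s" "s < t" for s
      proof -
        have "1 * f (x s) \<le> (1 + \<epsilon>) * f (x s)"
          using pos[OF x_pos[of s]] that S T\<^sub>0 eps by (intro mult_right_mono) auto
        then show ?thesis using below[of s] that by simp
      qed
      then have "x S \<le> x t" using S T\<^sub>0 by (intro x_increasing) auto
      then have "S \<noteq> T\<^sub>0" "f (x S) \<le> (1 + \<epsilon>) * f (x t)"
        using elim x_T\<^sub>0[of S] x_T\<^sub>0[of t] S by (auto intro: f_inc)
      then have "g S \<le> (1 + \<epsilon>) * ((1 + \<epsilon>) * f (x t))"
        using S eps by (smt (verit) mult_left_mono)
      then have "(1 + \<epsilon>) * g S \<le> (1 + \<epsilon>) * ((1 + \<epsilon>) * ((1 + \<epsilon>) * f (x t)))"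
        using eps by (intro mult_left_mono) auto
      moreover have "g t \<le> (1 + \<epsilon>) * g S" using g_dec S T\<^sub>0 by auto
      ultimately show False
        using \<open>\<not> g t \<le> (1 + \<epsilon>) ^ 3 * f (x t)\<close> by (simp add: power3_eq_cube mult_ac)
    qed
  qed
qed

lemma f_x_over_g_tendsto_1:
  assumes "almost_decreasing g" "almost_increasing_locally g"
  shows "((\<lambda>t. f (x t) / g t) \<longlongrightarrow> 1) at_top"
proof (rule tendsto_1_if_cube_bounds)
  fix \<epsilon> :: real assume "\<epsilon> > 0"
  show "eventually (\<lambda>t. 1 / (1 + \<epsilon>) ^ 3 \<le> f (x t) / g t \<and> f (x t) / g t \<le> (1 + \<epsilon>) ^ 3) at_top"
    using eventually_f_x_le[OF assms(2) \<open>\<epsilon> > 0\<close>] eventually_g_le[OF assms(1) \<open>\<epsilon> > 0\<close>]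
      eventually_gt_at_top[of 0]
  proof eventually_elim
    case (elim t)
    have "0 < (1 + \<epsilon>) ^ 3" using \<open>\<epsilon> > 0\<close> by simp
    with elim show ?case by (auto simp: g_pos field_simps)
  qed
qed

end

theorem theorem4:
  fixes f g x :: "real \<Rightarrow> real" and \<xi> \<beta> \<theta> :: real
  assumes f_cont: "continuous_on UNIV f"
    and f_lip: "loc_lipschitz f"
    and f0: "f 0 = 0"
    and f_sign: "\<And>y. y \<noteq> 0 \<Longrightarrow> y * f y > 0"
    and g_cont: "continuous_on {0..} g"
    and g_pos: "\<And>t. t > 0 \<Longrightarrow> g t > 0"
    and xi_pos: "\<xi> > 0"
    and F_lim: "filterlim (Fint f) at_top (at_right 0)"
    and x_cont: "continuous_on {0..} x"
    and x_init: "x 0 = \<xi>"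
    and x_ode: "\<And>t. t > 0 \<Longrightarrow> (x has_real_derivative (- f (x t) + g t)) (at t)"
    and g_big: "filterlim (\<lambda>t. g t / f (Finv f t)) at_top at_top"
    and f_RV: "RV0 f \<beta>" and beta_gt: "\<beta> > 1"
    and g_RV: "RVinf g (- \<theta>)" and theta_nonneg: "\<theta> \<ge> 0"
    and x_lim: "(x \<longlongrightarrow> 0) at_top"
  shows "(\<theta> > 0 \<longrightarrow> ((\<lambda>t. f (x t) / g t) \<longlongrightarrow> 1) at_top) \<and>
         ((\<theta> = 0 \<and> (\<exists>\<gamma>1 :: real \<Rightarrow> real.
              (\<forall>s t. 0 \<le> s \<longrightarrow> s \<le> t \<longrightarrow> \<gamma>1 t \<le> \<gamma>1 s) \<and>
              ((\<lambda>t. g t / \<gamma>1 t) \<longlongrightarrow> 1) at_top))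
           \<longrightarrow> ((\<lambda>t. f (x t) / g t) \<longlongrightarrow> 1) at_top)"
proof -
  have g_cont': "continuous_on {0<..} g" by (rule continuous_on_subset[OF g_cont]) auto
  have f_nonpos: "f y \<le> 0" if "y \<le> 0" for y
    using f0 f_sign[of y] that by (cases "y = 0") (auto simp: zero_less_mult_iff)
  interpret ode_asymptotics f g x \<beta>
  proof unfold_locales
    show "continuous_on {0<..} f" by (rule continuous_on_subset[OF f_cont]) auto
    show "f w > 0" if "w > 0" for w using f_sign[of w] that by (simp add: zero_less_mult_iff)
    show "x t > 0" if "t > 0" for t
      by (rule ODE_solution_positive[OF f_nonpos g_pos x_cont _ x_ode]) (use that x_init xi_pos in auto)
  qed (use f_RV beta_gt F_lim g_cont' g_pos x_ode x_lim g_big in auto)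
  have inc: "almost_increasing_locally g" by (rule RVinf_almost_increasing_locally[OF g_cont' g_RV])
  show ?thesis
  proof (intro conjI impI)
    assume "\<theta> > 0"
    then have "almost_decreasing g" by (intro RVinf_negative_almost_decreasing[OF g_cont' g_RV]) simp
    then show "((\<lambda>t. f (x t) / g t) \<longlongrightarrow> 1) at_top" using inc by (rule f_x_over_g_tendsto_1)
  next
    assume "\<theta> = 0 \<and> (\<exists>\<gamma>1 :: real \<Rightarrow> real. (\<forall>s t. 0 \<le> s \<longrightarrow> s \<le> t \<longrightarrow> \<gamma>1 t \<le> \<gamma>1 s) \<and>
      ((\<lambda>t. g t / \<gamma>1 t) \<longlongrightarrow> 1) at_top)"
    then obtain \<gamma> :: "real \<Rightarrow> real" where "\<forall>s t. 0 \<le> s \<longrightarrow> s \<le> t \<longrightarrow> \<gamma> t \<le> \<gamma> s"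
      and "((\<lambda>t. g t / \<gamma> t) \<longlongrightarrow> 1) at_top" by blast
    then have "almost_decreasing g" by (intro almost_decreasing_if_asymp_decreasing[OF g_pos])
    then show "((\<lambda>t. f (x t) / g t) \<longlongrightarrow> 1) at_top" using inc by (rule f_x_over_g_tendsto_1)
  qed
qed

end
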